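(* Let $0<R_{\rm id}<R_{\rm d}$, and let $\Omega$, $\Gamma_{\rm d}$, $\Gamma_{\rm id}$, $n$, $(\overline u,\overline q)$, $\omega^*$, $v(\omega)$, $\widehat v(\omega)$, $J'(\omega)$, the iteration $\omega_{k+1}=\omega_k-\rho_kJ'(\omega_k)$, $\mu_k=\omega^*-\omega_k$ and $C_j$ be as in the context. Assume there are integers $N\ge M\ge0$ such that the initial error has a finite Fourier expansion $\mu_0=\sum_{M\le|j|\le N}a_j^{(0)}e^{ij\theta}$ on $\Gamma_{\rm id}$. If the step sizes are chosen as $\rho_k=1/C_{M+k}$ for $k=0,1,\dots,N-M$, or alternatively as $\rho_k=1/C_{N-k}$ for $k=0,1,\dots,N-M$, then $\mu_{N-M+1}=0$, i.e. $\omega_{N-M+1}=\omega^*$.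
   Context: Setting: $0<R_{\rm id}<R_{\rm d}$; $\Omega=\{(x,y): R_{\rm id}^2<x^2+y^2<R_{\rm d}^2\}$ is an annulus with outer boundary $\Gamma_{\rm d}=\{x^2+y^2=R_{\rm d}^2\}$ and inner boundary $\Gamma_{\rm id}=\{x^2+y^2=R_{\rm id}^2\}$; $(r,\theta)$ are polar coordinates; $n$ is the unit outward normal to $\partial\Omega$ (so $\partial/\partial n=\partial/\partial r$ on $\Gamma_{\rm d}$ and $\partial/\partial n=-\partial/\partial r$ on $\Gamma_{\rm id}$). Given Cauchy data $(\overline u,\overline q)$ on $\Gamma_{\rm d}$. For a boundary value $\omega$ on $\Gamma_{\rm id}$, $v(\omega)$ denotes the solution of the primary problem $-\Delta v=0$ in $\Omega$, $\partial v/\partial n=\overline q$ on $\Gamma_{\rm d}$, $v=\omega$ on $\Gamma_{\rm id}$; $\widehat v(\omega)$ denotes the solution of the adjoint problem $-\Delta \widehat v=0$ in $\Omega$, $\partial\widehat v/\partial n=2(v(\omega)-\overline u)$ on $\Gamma_{\rm d}$, $\widehat v=0$ on $\Gamma_{\rm id}$; and $J'(\omega):=-\partial\widehat v(\omega)/\partial n|_{\Gamma_{\rm id}}$. The exact boundary value $\omega^*$ is assumed to exist, i.e. $v(\omega^* )|_{\Gamma_{\rm d}}=\overline u$. Starting from $\omega_0$ and step sizes $\rho_k>0$, the iteration is $\omega_{k+1}=\omega_k-\rho_kJ'(\omega_k)$ (with exact solution of the boundary value problems), and $\mu_k:=\omega^*-\omega_k$. For integers $j$, $$C_j:=\frac{8R_{\rm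 d}^{2|j|+1}R_{\rm id}^{2|j|-1}}{(R_{\rm id}^{2|j|}+R_{\rm d}^{2|j|})^2}.$$ Functions on $\Gamma_{\rm id}$ may be complex-valued; Fourier expansions are in $e^{ij\theta}$. *)

theory Defs
  imports "HOL-Analysis.Analysis"
begin

text \<open>The plane is identified with the type complex; a point with polar
coordinates (r, theta) is r * cis theta.  Functions on a circle of radius R
are represented as functions of the angle theta (values at R * cis theta).\<close>

definition annulus :: "real \<Rightarrow> real \<Rightarrow> complex set" where
  "annulus Ri Rd = {z. Ri < cmod z \<and> cmod z < Rd}"

definition closed_annulus :: "real \<Rightarrow> real \<Rightarrow> complex set" where
  "closed_annulus Ri Rd = {z. Ri \<le> cmod z \<and> cmod z \<le> Rd}"

text \<open>Classical (C^2) solutions of the Laplace equation -Delta u = 0 on an open set S,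
for complex-valued u on the plane (x = Re z, y = Im z); ux, uy are the first
partial derivatives, uxx, uxy, uyx, uyy the second ones.\<close>

definition harmonic_C2_on :: "complex set \<Rightarrow> (complex \<Rightarrow> complex) \<Rightarrow> bool" where
  "harmonic_C2_on S u \<longleftrightarrow>
     (\<exists>ux uy uxx uxy uyx uyy.
        (\<forall>z\<in>S.
           (u has_derivative (\<lambda>h. of_real (Re h) * ux z + of_real (Im h) * uy z)) (at z) \<and>
           (ux has_derivative (\<lambda>h. of_real (Re h) * uxx z + of_real (Im h) * uxy z)) (at z) \<and>
           (uy has_derivative (\<lambda>h. of_real (Re h) * uyx z + of_real (Im h) * uyy z)) (at z) \<and>
           uxx z + uyy z = 0) \<and>
        continuous_on S uxx \<and> continuous_on S uxy \<and>
        continuous_on S uyx \<and> continuous_on S uyy)"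

text \<open>Outward normal derivative on the outer circle: d/dn = d/dr (one-sided, from inside).\<close>
definition normal_deriv_outer :: "real \<Rightarrow> real \<Rightarrow> (complex \<Rightarrow> complex) \<Rightarrow> real \<Rightarrow> complex \<Rightarrow> bool" where
  "normal_deriv_outer Ri Rd u \<theta> g \<longleftrightarrow>
     ((\<lambda>r. u (complex_of_real r * cis \<theta>)) has_vector_derivative g) (at Rd within {Ri..Rd})"

text \<open>Outward normal derivative on the inner circle: d/dn = - d/dr (one-sided, from inside).\<close>
definition normal_deriv_inner :: "real \<Rightarrow> real \<Rightarrow> (complex \<Rightarrow> complex) \<Rightarrow> real \<Rightarrow> complex \<Rightarrow> bool" where
  "normal_deriv_inner Ri Rd u \<theta> g \<longleftrightarrow>
     ((\<lambda>r. u (complex_of_real r * cis \<theta>)) has_vector_derivative (- g)) (at Ri within {Ri..Rd})"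

text \<open>Classical solution of: -Delta u = 0 in Omega, du/dn = g on Gamma_d, u = h on Gamma_id.\<close>
definition mixed_solution ::
  "real \<Rightarrow> real \<Rightarrow> (real \<Rightarrow> complex) \<Rightarrow> (real \<Rightarrow> complex) \<Rightarrow> (complex \<Rightarrow> complex) \<Rightarrow> bool" where
  "mixed_solution Ri Rd g h u \<longleftrightarrow>
     continuous_on (closed_annulus Ri Rd) u \<and>
     harmonic_C2_on (annulus Ri Rd) u \<and>
     (\<forall>\<theta>. normal_deriv_outer Ri Rd u \<theta> (g \<theta>)) \<and>
     (\<forall>\<theta>. u (complex_of_real Ri * cis \<theta>) = h \<theta>)"

definition Cj :: "real \<Rightarrow> real \<Rightarrow> int \<Rightarrow> real" where
  "Cj Ri Rd j = 8 * Rd powr (2 * \<bar>real_of_int j\<bar> + 1) * Ri powr (2 * \<bar>real_of_int j\<bar> - 1)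
                / (Ri powr (2 * \<bar>real_of_int j\<bar>) + Rd powr (2 * \<bar>real_of_int j\<bar>))\<^sup>2"

end

theory Submission
  imports Defs
begin

(* The argument is a Fourier-mode computation.  For every integer j the functions
   r^|j| e^{ij theta} and r^-|j| e^{ij theta} (ln r e^{ij theta} for j = 0) are
   harmonic, so finite sums of them with suitable radial coefficients solve the
   primary and the adjoint problem explicitly.  A maximum principle (with the
   barrier eps/|z|^2) shows that the mixed Neumann-Dirichlet problem has at most
   one classical solution, hence these explicit solutions are THE solutions.
   Reading off the normal derivative on the inner circle gives the key fact: if
   the error omega* - omega_k is a finite Fourier sum  sum c_j e^{ij theta},
   then  J'(omega_k) = - sum C_j c_j e^{ij theta},  i.e. the gradient acts
   diagonally on Fourier modes with eigenvalues C_j.  Consequently a step with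
   step size rho_k multiplies the j-th coefficient by (1 - rho_k C_j), so the step
   rho_k = 1/C_m kills the modes j = m and j = -m; both step-size schedules of the
   theorem visit every m in [M, N], so after N - M + 1 steps every mode is gone. *)


section \<open>Closure properties of classical harmonic functions\<close>

lemma harmonic_lincomb:
  assumes "harmonic_C2_on S u" "harmonic_C2_on S v"
  shows "harmonic_C2_on S (\<lambda>z. a * u z + b * v z)"
proof -
  obtain ux uy uxx uxy uyx uyy where U:
    "\<forall>z\<in>S. (u has_derivative (\<lambda>h. of_real (Re h) * ux z + of_real (Im h) * uy z)) (at z) \<and>
           (ux has_derivative (\<lambda>h. of_real (Re h) * uxx z + of_real (Im h) * uxy z)) (at z) \<and>
           (uy has_derivative (\<lambda>h. of_real (Re h) * uyx z + of_real (Im h) * uyy z)) (at z) \<and>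
           uxx z + uyy z = 0"
     "continuous_on S uxx" "continuous_on S uxy" "continuous_on S uyx" "continuous_on S uyy"
    using assms(1) unfolding harmonic_C2_on_def by blast
  obtain vx vy vxx vxy vyx vyy where V:
    "\<forall>z\<in>S. (v has_derivative (\<lambda>h. of_real (Re h) * vx z + of_real (Im h) * vy z)) (at z) \<and>
           (vx has_derivative (\<lambda>h. of_real (Re h) * vxx z + of_real (Im h) * vxy z)) (at z) \<and>
           (vy has_derivative (\<lambda>h. of_real (Re h) * vyx z + of_real (Im h) * vyy z)) (at z) \<and>
           vxx z + vyy z = 0"
     "continuous_on S vxx" "continuous_on S vxy" "continuous_on S vyx" "continuous_on S vyy"
    using assms(2) unfolding harmonic_C2_on_def by blast
  have lin_deriv: "((\<lambda>z. a * f z + b * g z) has_derivative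
       (\<lambda>h. of_real (Re h) * (a * fx z + b * gx z) + of_real (Im h) * (a * fy z + b * gy z))) (at z)"
    if "(f has_derivative (\<lambda>h. of_real (Re h) * fx z + of_real (Im h) * fy z)) (at z)"
       "(g has_derivative (\<lambda>h. of_real (Re h) * gx z + of_real (Im h) * gy z)) (at z)"
    for f g fx fy gx gy z
    using has_derivative_add[OF has_derivative_mult_right[OF that(1), of a]
                                has_derivative_mult_right[OF that(2), of b]]
    by (simp add: algebra_simps)
  have laplace: "a * uxx z + b * vxx z + (a * uyy z + b * vyy z) = 0" if "z \<in> S" for z
  proof -
    have "a * uxx z + b * vxx z + (a * uyy z + b * vyy z) = a * (uxx z + uyy z) + b * (vxx z + vyy z)"
      by (simp add: algebra_simps)
    then show ?thesis using U(1) V(1) that by simp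
  qed
  show ?thesis
    unfolding harmonic_C2_on_def
    apply (rule exI[of _ "\<lambda>z. a * ux z + b * vx z"], rule exI[of _ "\<lambda>z. a * uy z + b * vy z"])
    apply (rule exI[of _ "\<lambda>z. a * uxx z + b * vxx z"], rule exI[of _ "\<lambda>z. a * uxy z + b * vxy z"])
    apply (rule exI[of _ "\<lambda>z. a * uyx z + b * vyx z"], rule exI[of _ "\<lambda>z. a * uyy z + b * vyy z"])
    using U V by (auto intro!: lin_deriv laplace continuous_intros)
qed

lemma harmonic_const: "harmonic_C2_on S (\<lambda>z. c)"
  unfolding harmonic_C2_on_def by (rule exI[of _ "\<lambda>z. 0"])+ auto

lemma harmonic_sum:
  assumes "finite I" "\<And>i. i \<in> I \<Longrightarrow> harmonic_C2_on S (f i)"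
  shows "harmonic_C2_on S (\<lambda>z. \<Sum>i\<in>I. f i z)"
  using assms
proof (induction I rule: finite_induct)
  case empty then show ?case by (simp add: harmonic_const)
next
  case (insert i I)
  then show ?case using harmonic_lincomb[of S "f i" "\<lambda>z. \<Sum>i\<in>I. f i z" 1 1] by simp
qed

text \<open>A function that is twice complex differentiable with continuous second derivative
  is harmonic, and so is its complex conjugate: the partial derivatives are
  f' and i f' (resp. their conjugates), and the Laplacian is f'' + i^2 f'' = 0.\<close>
lemma harmonic_holomorphic:
  assumes d1: "\<And>z. z \<in> S \<Longrightarrow> (f has_field_derivative f1 z) (at z)"
    and d2: "\<And>z. z \<in> S \<Longrightarrow> (f1 has_field_derivative f2 z) (at z)"
    and c: "continuous_on S f2"
  shows "harmonic_C2_on S f" "harmonic_C2_on S (\<lambda>z. cnj (f z))"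
proof -
  have partials: "(g has_derivative (\<lambda>h. of_real (Re h) * g1 + of_real (Im h) * (\<i> * g1))) (at z)"
    if "(g has_field_derivative g1) (at z)" for g g1 z
    using that unfolding has_field_derivative_def
    by (rule has_derivative_eq_rhs) (simp add: fun_eq_iff complex_eq_iff algebra_simps)
  have partials_cnj: "((\<lambda>z. cnj (g z)) has_derivative
      (\<lambda>h. of_real (Re h) * cnj g1 + of_real (Im h) * (- \<i> * cnj g1))) (at z)"
    if "(g has_field_derivative g1) (at z)" for g g1 z
    using has_derivative_cnj[OF that[unfolded has_field_derivative_def]]
    by (rule has_derivative_eq_rhs) (simp add: fun_eq_iff complex_eq_iff algebra_simps)
  have partials_i: "((\<lambda>z. \<i> * g z) has_derivative
      (\<lambda>h. of_real (Re h) * (\<i> * g1) + of_real (Im h) * (- g1))) (at z)"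
    if "(g has_field_derivative g1) (at z)" for g g1 z
    using has_derivative_mult_right[OF partials[OF that], of \<i>]
    by (rule has_derivative_eq_rhs) (simp add: fun_eq_iff algebra_simps)
  have partials_i_cnj: "((\<lambda>z. - \<i> * cnj (g z)) has_derivative
      (\<lambda>h. of_real (Re h) * (- \<i> * cnj g1) + of_real (Im h) * (- cnj g1))) (at z)"
    if "(g has_field_derivative g1) (at z)" for g g1 z
    using has_derivative_mult_right[OF partials_cnj[OF that], of "- \<i>"]
    by (rule has_derivative_eq_rhs) (simp add: fun_eq_iff algebra_simps)
  show "harmonic_C2_on S f"
    unfolding harmonic_C2_on_def
    apply (rule exI[of _ f1], rule exI[of _ "\<lambda>z. \<i> * f1 z"])
    apply (rule exI[of _ f2], rule exI[of _ "\<lambda>z. \<i> * f2 z"])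
    apply (rule exI[of _ "\<lambda>z. \<i> * f2 z"], rule exI[of _ "\<lambda>z. - f2 z"])
    apply (intro conjI ballI)
    subgoal for z by (rule partials, rule d1)
    subgoal for z by (rule partials, rule d2)
    subgoal for z by (rule partials_i, rule d2)
    using c by (auto intro!: continuous_intros)
  show "harmonic_C2_on S (\<lambda>z. cnj (f z))"
    unfolding harmonic_C2_on_def
    apply (rule exI[of _ "\<lambda>z. cnj (f1 z)"], rule exI[of _ "\<lambda>z. - \<i> * cnj (f1 z)"])
    apply (rule exI[of _ "\<lambda>z. cnj (f2 z)"], rule exI[of _ "\<lambda>z. - \<i> * cnj (f2 z)"])
    apply (rule exI[of _ "\<lambda>z. - \<i> * cnj (f2 z)"], rule exI[of _ "\<lambda>z. - cnj (f2 z)"])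
    apply (intro conjI ballI)
    subgoal for z by (rule partials_cnj, rule d1)
    subgoal for z by (rule partials_cnj, rule d2)
    subgoal for z by (rule partials_i_cnj, rule d2)
    using c by (auto intro!: continuous_intros)
qed

lemma has_derivative_complex_of_real:
  assumes "(g has_derivative (\<lambda>h. Re h * a + Im h * b)) F"
  shows "((\<lambda>z. of_real (g z)::complex) has_derivative
           (\<lambda>h. of_real (Re h) * of_real a + of_real (Im h) * of_real b)) F"
  using has_derivative_of_real[OF assms] by simp

definition log_modulus :: "complex \<Rightarrow> complex" where
  "log_modulus z = of_real (ln ((Re z)\<^sup>2 + (Im z)\<^sup>2) / 2)"

text \<open>ln |z| is harmonic away from the origin (its partials are x/|z|^2 and y/|z|^2).\<close>
lemma harmonic_log_modulus:
  assumes "0 \<notin> S"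
  shows "harmonic_C2_on S log_modulus"
proof -
  define q where "q z = (Re z)\<^sup>2 + (Im z)\<^sup>2" for z
  have qpos: "q z > 0" if "z \<in> S" for z
    using assms that by (metis q_def complex_eq_0 not_less_iff_gr_or_eq sum_power2_gt_zero_iff)
  have dq: "(q has_derivative (\<lambda>h. 2 * Re z * Re h + 2 * Im z * Im h)) (at z)" for z
    unfolding q_def by (auto intro!: derivative_eq_intros simp: fun_eq_iff)
  show ?thesis
    unfolding harmonic_C2_on_def
    apply (rule exI[of _ "\<lambda>z. of_real (Re z / q z)"], rule exI[of _ "\<lambda>z. of_real (Im z / q z)"])
    apply (rule exI[of _ "\<lambda>z. of_real ((Im z ^ 2 - Re z ^ 2) / (q z)\<^sup>2)"])
    apply (rule exI[of _ "\<lambda>z. of_real (- 2 * Re z * Im z / (q z)\<^sup>2)"])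
    apply (rule exI[of _ "\<lambda>z. of_real (- 2 * Re z * Im z / (q z)\<^sup>2)"])
    apply (rule exI[of _ "\<lambda>z. of_real ((Re z ^ 2 - Im z ^ 2) / (q z)\<^sup>2)"])
    apply (intro conjI ballI)
    subgoal for z
      unfolding log_modulus_def q_def[symmetric]
      using qpos[of z]
      apply (intro has_derivative_complex_of_real
          has_derivative_eq_rhs[OF has_derivative_divide'[OF has_derivative_ln[OF _ dq]]])
      by (auto intro!: derivative_eq_intros simp: fun_eq_iff field_simps power2_eq_square)
    subgoal for z
      using qpos[of z]
      apply (intro has_derivative_complex_of_real has_derivative_eq_rhs[OF has_derivative_divide'[OF _ dq]])
       apply (auto intro!: derivative_eq_intros simp: fun_eq_iff field_simps power2_eq_square q_def)
      by (simp add: add_divide_distrib[symmetric] diff_divide_distrib[symmetric] algebra_simps)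
    subgoal for z
      using qpos[of z]
      apply (intro has_derivative_complex_of_real has_derivative_eq_rhs[OF has_derivative_divide'[OF _ dq]])
       apply (auto intro!: derivative_eq_intros simp: fun_eq_iff field_simps power2_eq_square q_def)
      by (simp add: add_divide_distrib[symmetric] diff_divide_distrib[symmetric] algebra_simps)
    subgoal for z
      using qpos[of z] by (simp add: add_divide_distrib[symmetric])
    using qpos unfolding q_def
    apply (auto intro!: continuous_intros)
    by (metis of_real_add of_real_power of_real_eq_0_iff less_irrefl)+
qed

lemma continuous_on_log_modulus:
  assumes "0 \<notin> S" shows "continuous_on S log_modulus"
proof -
  have "(Re z)\<^sup>2 + (Im z)\<^sup>2 > 0" if "z \<in> S" for z
    using assms that by (metis complex_eq_0 not_less_iff_gr_or_eq sum_power2_gt_zero_iff)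
  then show ?thesis unfolding log_modulus_def
    by (intro continuous_on_of_real continuous_intros) (use \<open>\<And>z. z \<in> S \<Longrightarrow> _\<close> in force)+
qed

lemma harmonic_power: "harmonic_C2_on S (\<lambda>z. z ^ n)" "harmonic_C2_on S (\<lambda>z. cnj (z ^ n))"
proof -
  have d1: "((\<lambda>z. z ^ n) has_field_derivative of_nat n * z ^ (n - 1)) (at z)" for z :: complex
    using DERIV_power[OF DERIV_ident, of n z UNIV] by simp
  have d2: "((\<lambda>z. of_nat n * z ^ (n - 1)) has_field_derivative
             of_nat n * (of_nat (n - 1) * z ^ (n - 1 - 1))) (at z)" for z :: complex
    using DERIV_cmult[OF DERIV_power[OF DERIV_ident, of "n - 1" z UNIV], of "of_nat n"] by simp
  show "harmonic_C2_on S (\<lambda>z. z ^ n)" "harmonic_C2_on S (\<lambda>z. cnj (z ^ n))"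
    by (rule harmonic_holomorphic[OF d1 d2]; auto intro!: continuous_intros)+
qed

lemma inverse_power_deriv:
  fixes z :: complex
  assumes "z \<noteq> 0"
  shows "((\<lambda>z. 1 / z ^ n) has_field_derivative - of_nat n / z ^ (n + 1)) (at z)"
  using assms
  apply (cases n)
   apply (auto intro!: derivative_eq_intros
      simp: field_simps power_add power_Suc[symmetric] simp del: power_Suc)
  by (simp add: algebra_simps)

lemma harmonic_inverse_power:
  assumes "0 \<notin> S"
  shows "harmonic_C2_on S (\<lambda>z. 1 / z ^ n)" "harmonic_C2_on S (\<lambda>z. cnj (1 / z ^ n))"
proof -
  have d1: "((\<lambda>z. 1 / z ^ n) has_field_derivative - of_nat n / z ^ (n + 1)) (at z)"
    if "z \<in> S" for z :: complex
    using that assms by (intro inverse_power_deriv) auto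
  have d2: "((\<lambda>z. - of_nat n / z ^ (n + 1)) has_field_derivative
              (- of_nat n) * (- of_nat (n + 1) / z ^ (n + 1 + 1))) (at z)"
    if "z \<in> S" for z :: complex
  proof -
    have "z \<noteq> 0" using that assms by auto
    have "(\<lambda>z::complex. - of_nat n / z ^ (n + 1)) = (\<lambda>z. (- of_nat n) * (1 / z ^ (n+1)))" by auto
    with DERIV_cmult[OF inverse_power_deriv[OF \<open>z \<noteq> 0\<close>, of "n+1"], of "- of_nat n"]
    show ?thesis by simp
  qed
  show "harmonic_C2_on S (\<lambda>z. 1 / z ^ n)" "harmonic_C2_on S (\<lambda>z. cnj (1 / z ^ n))"
    using assms by (intro harmonic_holomorphic[OF d1 d2]; auto intro!: continuous_intros)+
qed


section \<open>Separated harmonic modes on the annulus\<close>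

definition fourier :: "int \<Rightarrow> real \<Rightarrow> complex" where
  "fourier j \<theta> = exp (\<i> * of_int j * complex_of_real \<theta>)"

text \<open>The two harmonic functions carrying the mode j: in polar coordinates they are
  r^|j| e^{ij theta} and r^-|j| e^{ij theta} (for j = 0: 1 and ln r).\<close>
definition growing_mode :: "int \<Rightarrow> complex \<Rightarrow> complex" where
  "growing_mode j z = (if 0 \<le> j then z ^ nat j else cnj (z ^ nat (- j)))"

definition decaying_mode :: "int \<Rightarrow> complex \<Rightarrow> complex" where
  "decaying_mode j z =
     (if j = 0 then log_modulus z else if 0 < j then cnj (1 / z ^ nat j) else 1 / z ^ nat (- j))"

definition grow_rad :: "int \<Rightarrow> real \<Rightarrow> real" where
  "grow_rad j r = r ^ nat \<bar>j\<bar>"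
definition decay_rad :: "int \<Rightarrow> real \<Rightarrow> real" where
  "decay_rad j r = (if j = 0 then ln r else 1 / r ^ nat \<bar>j\<bar>)"
definition grow_rad_deriv :: "int \<Rightarrow> real \<Rightarrow> real" where
  "grow_rad_deriv j r = real (nat \<bar>j\<bar>) * r ^ nat \<bar>j\<bar> / r"
definition decay_rad_deriv :: "int \<Rightarrow> real \<Rightarrow> real" where
  "decay_rad_deriv j r = (if j = 0 then 1 / r else - real (nat \<bar>j\<bar>) / (r ^ nat \<bar>j\<bar> * r))"

lemma fourier_cis: "fourier j \<theta> = cis (of_int j * \<theta>)"
  unfolding fourier_def cis_conv_exp by (simp add: mult.assoc)

lemma polar_power: "(complex_of_real r * cis \<theta>) ^ n = of_real (r ^ n) * cis (real n * \<theta>)"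
  by (simp add: power_mult_distrib Complex.DeMoivre)

lemma growing_mode_polar:
  "growing_mode j (complex_of_real r * cis \<theta>) = of_real (grow_rad j r) * fourier j \<theta>"
proof (cases "0 \<le> j")
  case True
  then show ?thesis unfolding growing_mode_def grow_rad_def fourier_cis polar_power by simp
next
  case False
  then have "real (nat (- j)) = - of_int j" by simp
  then show ?thesis using False unfolding growing_mode_def grow_rad_def fourier_cis polar_power
    by (simp add: cis_cnj)
qed

lemma decaying_mode_polar:
  assumes "r > 0"
  shows "decaying_mode j (complex_of_real r * cis \<theta>) = of_real (decay_rad j r) * fourier j \<theta>"
proof -
  consider "j = 0" | "0 < j" | "j < 0" by linarith
  then show ?thesis
  proof cases
    case 1
    have "(r * cos \<theta>)\<^sup>2 + (r * sin \<theta>)\<^sup>2 = r ^ 2"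
      by (simp add: power_mult_distrib algebra_simps flip: distrib_left)
    then show ?thesis using 1 assms
      unfolding decaying_mode_def decay_rad_def fourier_def log_modulus_def
      by (simp add: ln_realpow)
  next
    case 2
    then show ?thesis using assms unfolding decaying_mode_def decay_rad_def fourier_cis polar_power
      by (simp add: cis_cnj divide_inverse inverse_mult_distrib cis_inverse)
  next
    case 3
    then have "real (nat (- j)) = - of_int j" by simp
    then show ?thesis using 3 assms unfolding decaying_mode_def decay_rad_def fourier_cis polar_power
      by (simp add: divide_inverse inverse_mult_distrib cis_inverse)
  qed
qed

lemma harmonic_growing_mode: "harmonic_C2_on S (growing_mode j)"
proof (cases "0 \<le> j")
  case True
  then have "growing_mode j = (\<lambda>z. z ^ nat j)" by (auto simp: growing_mode_def fun_eq_iff)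
  then show ?thesis using harmonic_power(1) by simp
next
  case False
  then have "growing_mode j = (\<lambda>z. cnj (z ^ nat (- j)))" by (auto simp: growing_mode_def fun_eq_iff)
  then show ?thesis using harmonic_power(2) by simp
qed

lemma harmonic_decaying_mode:
  assumes "0 \<notin> S" shows "harmonic_C2_on S (decaying_mode j)"
proof -
  consider "j = 0" | "0 < j" | "j < 0" by linarith
  then show ?thesis
  proof cases
    case 1
    then have "decaying_mode j = log_modulus" by (auto simp: decaying_mode_def fun_eq_iff)
    then show ?thesis using harmonic_log_modulus[OF assms] by simp
  next
    case 2
    then have "decaying_mode j = (\<lambda>z. cnj (1 / z ^ nat j))" by (auto simp: decaying_mode_def fun_eq_iff)
    then show ?thesis using harmonic_inverse_power(2)[OF assms] by simp
  next
    case 3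
    then have "decaying_mode j = (\<lambda>z. 1 / z ^ nat (- j))" by (auto simp: decaying_mode_def fun_eq_iff)
    then show ?thesis using harmonic_inverse_power(1)[OF assms] by simp
  qed
qed

lemma continuous_on_growing_mode: "continuous_on S (growing_mode j)"
  unfolding growing_mode_def by (cases "0 \<le> j") (auto intro!: continuous_intros)

lemma continuous_on_decaying_mode:
  assumes "0 \<notin> S" shows "continuous_on S (decaying_mode j)"
proof -
  have "continuous_on S (\<lambda>z. 1 / z ^ n)" for n
    using assms by (intro continuous_intros) auto
  then show ?thesis using continuous_on_log_modulus[OF assms] unfolding decaying_mode_def
    using assms by (cases "j = 0"; cases "0 < j") (auto intro!: continuous_intros)
qed

lemma grow_rad_has_derivative:
  assumes x: "x > 0" shows "(grow_rad j has_real_derivative grow_rad_deriv j x) (at x within T)"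
proof (cases "nat \<bar>j\<bar>")
  case 0
  then show ?thesis by (simp add: grow_rad_def[abs_def] grow_rad_deriv_def)
next
  case (Suc m)
  have "((\<lambda>r. r ^ Suc m) has_real_derivative (1 + of_nat m) * (1 * x ^ m)) (at x within T)"
    by (rule DERIV_power_Suc[OF DERIV_ident])
  then show ?thesis unfolding grow_rad_def[abs_def] grow_rad_deriv_def Suc
    by (rule DERIV_cong) (use x in \<open>simp add: field_simps\<close>)
qed

lemma decay_rad_has_derivative:
  assumes x: "x > 0" shows "(decay_rad j has_real_derivative decay_rad_deriv j x) (at x within T)"
proof (cases "j = 0")
  case True
  have "(ln has_real_derivative 1 / x) (at x within T)"
    using x by (auto intro!: derivative_eq_intros)
  then show ?thesis using True unfolding decay_rad_def decay_rad_deriv_def by simp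
next
  case False
  have "((\<lambda>r. inverse (grow_rad j r)) has_real_derivative
          - (grow_rad_deriv j x * inverse (grow_rad j x ^ Suc (Suc 0)))) (at x within T)"
    using x by (intro DERIV_inverse_fun grow_rad_has_derivative) (auto simp: grow_rad_def)
  then have "((\<lambda>r. inverse (grow_rad j r)) has_real_derivative decay_rad_deriv j x) (at x within T)"
    by (rule DERIV_cong)
       (use x False in \<open>simp add: decay_rad_deriv_def grow_rad_def grow_rad_deriv_def
                                   field_simps power2_eq_square\<close>)
  moreover have "(\<lambda>r. inverse (grow_rad j r)) = decay_rad j"
    using False unfolding decay_rad_def[abs_def] grow_rad_def by (simp add: divide_inverse)
  ultimately show ?thesis by simp
qed


definition mode_sum :: "int set \<Rightarrow> (int \<Rightarrow> complex) \<Rightarrow> (int \<Rightarrow> real) \<Rightarrow> (int \<Rightarrow> real)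
                         \<Rightarrow> complex \<Rightarrow> complex" where
  "mode_sum S c A B z =
     (\<Sum>j\<in>S. c j * (of_real (A j) * growing_mode j z + of_real (B j) * decaying_mode j z))"

definition profile :: "(int \<Rightarrow> real) \<Rightarrow> (int \<Rightarrow> real) \<Rightarrow> int \<Rightarrow> real \<Rightarrow> real" where
  "profile A B j r = A j * grow_rad j r + B j * decay_rad j r"

definition profile_deriv :: "(int \<Rightarrow> real) \<Rightarrow> (int \<Rightarrow> real) \<Rightarrow> int \<Rightarrow> real \<Rightarrow> real" where
  "profile_deriv A B j r = A j * grow_rad_deriv j r + B j * decay_rad_deriv j r"

lemma mode_sum_polar:
  assumes "r > 0"
  shows "mode_sum S c A B (complex_of_real r * cis \<theta>) =
           (\<Sum>j\<in>S. c j * of_real (profile A B j r) * fourier j \<theta>)"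
  unfolding mode_sum_def growing_mode_polar decaying_mode_polar[OF assms] profile_def
  by (simp add: algebra_simps)

lemma mode_sum_radial_derivative:
  assumes "0 < Ri" "x \<in> {Ri..Rd}"
  shows "((\<lambda>r. mode_sum S c A B (complex_of_real r * cis \<theta>)) has_vector_derivative
           (\<Sum>j\<in>S. c j * of_real (profile_deriv A B j x) * fourier j \<theta>)) (at x within {Ri..Rd})"
proof -
  have x: "x > 0" using assms by auto
  have "((\<lambda>r. \<Sum>j\<in>S. c j * of_real (profile A B j r) * fourier j \<theta>) has_vector_derivative
          (\<Sum>j\<in>S. c j * of_real (profile_deriv A B j x) * fourier j \<theta>)) (at x within {Ri..Rd})"
    unfolding profile_def profile_deriv_def
    by (intro has_vector_derivative_sum has_vector_derivative_mult_left has_vector_derivative_mult_right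
        has_vector_derivative_of_real DERIV_add DERIV_cmult
        grow_rad_has_derivative decay_rad_has_derivative x)
  then show ?thesis
    by (rule has_vector_derivative_transform_within[where d=1])
       (use assms in \<open>auto simp: mode_sum_polar\<close>)
qed

lemma mode_sum_mixed_solution:
  assumes Ri: "0 < Ri" "Ri < Rd" and fin: "finite S"
  shows "mixed_solution Ri Rd
           (\<lambda>\<theta>. \<Sum>j\<in>S. c j * of_real (profile_deriv A B j Rd) * fourier j \<theta>)
           (\<lambda>\<theta>. \<Sum>j\<in>S. c j * of_real (profile A B j Ri) * fourier j \<theta>)
           (mode_sum S c A B)"
proof -
  have no0: "0 \<notin> closed_annulus Ri Rd" "0 \<notin> annulus Ri Rd"
    using Ri by (auto simp: closed_annulus_def annulus_def)
  have "mode_sum S c A B = (\<lambda>z. \<Sum>j\<in>S. (c j * of_real (A j)) * growing_mode j z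
                                              + (c j * of_real (B j)) * decaying_mode j z)"
    by (auto simp: mode_sum_def fun_eq_iff algebra_simps)
  then have "continuous_on (closed_annulus Ri Rd) (mode_sum S c A B)"
    "harmonic_C2_on (annulus Ri Rd) (mode_sum S c A B)"
    using no0 fin
    by (auto intro!: continuous_intros continuous_on_growing_mode continuous_on_decaying_mode
        harmonic_sum harmonic_lincomb harmonic_growing_mode harmonic_decaying_mode)
  then show ?thesis
    unfolding mixed_solution_def normal_deriv_outer_def
    using Ri mode_sum_radial_derivative[OF Ri(1), of Rd] mode_sum_polar[OF Ri(1)] by auto
qed


section \<open>Uniqueness for the mixed Neumann-Dirichlet problem\<close>

lemma mixed_solution_lincomb:
  assumes "mixed_solution Ri Rd g1 h1 u1" "mixed_solution Ri Rd g2 h2 u2"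
  shows "mixed_solution Ri Rd (\<lambda>\<theta>. a * g1 \<theta> + b * g2 \<theta>) (\<lambda>\<theta>. a * h1 \<theta> + b * h2 \<theta>)
           (\<lambda>z. a * u1 z + b * u2 z)"
  using assms unfolding mixed_solution_def normal_deriv_outer_def
  by (auto intro!: continuous_intros harmonic_lincomb has_vector_derivative_add
      has_vector_derivative_mult_right)

lemma local_max_second_derivative_nonpos:
  fixes g g' :: "real \<Rightarrow> real"
  assumes e: "e > 0" and d: "\<And>t. \<bar>t\<bar> < e \<Longrightarrow> (g has_real_derivative g' t) (at t)"
    and d2: "(g' has_real_derivative c) (at 0)" and mx: "\<And>t. \<bar>t\<bar> < e \<Longrightarrow> g t \<le> g 0"
  shows "c \<le> 0"
proof (rule ccontr)
  assume "\<not> c \<le> 0" hence c: "c > 0" by simp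
  have g0: "g' 0 = 0"
    using DERIV_local_max[OF d[of 0] e] mx e by auto
  from d2 have "((\<lambda>h. (g' (0 + h) - g' 0) / h) \<longlongrightarrow> c) (at 0)" by (simp add: DERIV_def)
  then have "((\<lambda>h. g' h / h) \<longlongrightarrow> c) (at 0)" using g0 by simp
  then have "\<forall>\<^sub>F h in at 0. g' h / h > 0" using c by (rule order_tendstoD(1))
  then obtain d where dpos: "d > 0" and dd: "\<And>h. h \<noteq> 0 \<Longrightarrow> dist h 0 < d \<Longrightarrow> g' h / h > 0"
    unfolding eventually_at by auto
  define t where "t = min d e / 2"
  have t: "0 < t" "t < d" "t < e" using dpos e by (auto simp: t_def)
  obtain z where z: "0 < z" "z < t" "g t - g 0 = (t - 0) * g' z"
    using MVT2[of 0 t g g'] t d by force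
  have "g' z / z > 0" using dd[of z] z t by auto
  then have "g' z > 0" using z by (simp add: zero_less_divide_iff)
  then have "g t > g 0" using z t by (simp add: algebra_simps)
  then show False using mx[of t] t by auto
qed

lemma negative_derivative_at_right_end:
  fixes f :: "real \<Rightarrow> real"
  assumes "(f has_real_derivative D) (at b within {a..b})" "D < 0" "a < b"
  shows "\<exists>r. a \<le> r \<and> r < b \<and> f r > f b"
proof -
  from assms(1) have "((\<lambda>y. (f y - f b) / (y - b)) \<longlongrightarrow> D) (at b within {a..b})"
    by (simp add: has_field_derivative_iff)
  then have "\<forall>\<^sub>F y in at b within {a..b}. (f y - f b) / (y - b) < 0"
    using assms(2) by (rule order_tendstoD(2))
  then obtain d where dpos: "d > 0"
    and dd: "\<And>y. y \<in> {a..b} \<Longrightarrow> y \<noteq> b \<Longrightarrow> dist y b < d \<Longrightarrow> (f y - f b) / (y - b) < 0"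
    unfolding eventually_at by auto
  define y where "y = max a (b - d / 2)"
  have y: "a \<le> y" "y < b" "dist y b < d" using dpos assms(3) by (auto simp: y_def dist_real_def)
  have "(f y - f b) / (y - b) < 0" using dd[of y] y by auto
  then have "f y - f b > 0" using y by (simp add: divide_less_0_iff)
  then show ?thesis using y by auto
qed

lemma Re_along_line:
  assumes "(f has_derivative (\<lambda>h. of_real (Re h) * a + of_real (Im h) * b)) (at (p + of_real t * d))"
  shows "((\<lambda>s. Re (f (p + of_real s * d))) has_real_derivative Re (of_real (Re d) * a + of_real (Im d) * b)) (at t)"
proof -
  have line: "((\<lambda>s. p + of_real s * d) has_derivative (\<lambda>s. of_real s * d)) (at t)"
    by (auto intro!: derivative_eq_intros)
  have "((\<lambda>s. Re (f (p + of_real s * d))) has_derivative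
          (\<lambda>s. Re (of_real (Re (of_real s * d)) * a + of_real (Im (of_real s * d)) * b))) (at t)"
    using bounded_linear.has_derivative[OF bounded_linear_Re diff_chain_at[OF line assms]]
    by (simp add: o_def)
  then show ?thesis unfolding has_field_derivative_def
    by (rule has_derivative_eq_rhs) (auto simp: fun_eq_iff algebra_simps)
qed

lemma barrier_line_deriv:
  assumes "(x + t)\<^sup>2 + y\<^sup>2 \<noteq> 0"
  shows "((\<lambda>s. \<epsilon> / ((x + s)\<^sup>2 + y\<^sup>2)) has_real_derivative
           (- 2 * \<epsilon> * (x + t) / ((x + t)\<^sup>2 + y\<^sup>2)\<^sup>2)) (at t)"
  using assms by (auto intro!: derivative_eq_intros simp: field_simps power2_eq_square)

lemma barrier_line_second_deriv:
  assumes "x\<^sup>2 + y\<^sup>2 \<noteq> 0"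
  shows "((\<lambda>s. - 2 * \<epsilon> * (x + s) / ((x + s)\<^sup>2 + y\<^sup>2)\<^sup>2) has_real_derivative
           (2 * \<epsilon> * (3 * x\<^sup>2 - y\<^sup>2) / (x\<^sup>2 + y\<^sup>2) ^ 3)) (at 0)"
proof -
  have sq: "(x\<^sup>2 + y\<^sup>2)\<^sup>2 \<noteq> 0" using assms by simp
  show ?thesis
    apply (rule DERIV_cong)
     apply (rule derivative_eq_intros refl | simp)+
    using assms apply simp
     apply (rule refl)
    using sq assms by (simp add: divide_simps) algebra
qed

text \<open>Key step of the maximum principle: a harmonic function plus the strictly
  subharmonic barrier eps/|z|^2 (whose Laplacian is 4 eps/|z|^4 > 0) has no maximum
  in an open set avoiding the origin.\<close>
lemma barrier_no_interior_max:
  assumes harm: "harmonic_C2_on S w" and S: "open S" "0 \<notin> S" and pS: "p \<in> S" and eps: "\<epsilon> > 0"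
    and mx: "\<And>y. y \<in> S \<Longrightarrow> Re (w y) + \<epsilon> / (cmod y)\<^sup>2 \<le> Re (w p) + \<epsilon> / (cmod p)\<^sup>2"
  shows False
proof -
  obtain ux uy uxx uxy uyx uyy where U:
    "\<And>z. z \<in> S \<Longrightarrow> (w has_derivative (\<lambda>h. of_real (Re h) * ux z + of_real (Im h) * uy z)) (at z)"
    "\<And>z. z \<in> S \<Longrightarrow> (ux has_derivative (\<lambda>h. of_real (Re h) * uxx z + of_real (Im h) * uxy z)) (at z)"
    "\<And>z. z \<in> S \<Longrightarrow> (uy has_derivative (\<lambda>h. of_real (Re h) * uyx z + of_real (Im h) * uyy z)) (at z)"
    "\<And>z. z \<in> S \<Longrightarrow> uxx z + uyy z = 0"
    using harm unfolding harmonic_C2_on_def by blast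
  define Uf where "Uf y = Re (w y) + \<epsilon> / ((Re y)\<^sup>2 + (Im y)\<^sup>2)" for y
  have pmax: "Uf y \<le> Uf p" if "y \<in> S" for y
    using mx[OF that] by (simp add: Uf_def cmod_power2)
  have qpos: "(Re y)\<^sup>2 + (Im y)\<^sup>2 > 0" if "y \<in> S" for y
    using S(2) that by (metis complex_eq_0 not_less_iff_gr_or_eq sum_power2_gt_zero_iff)
  obtain e where e: "e > 0" "ball p e \<subseteq> S"
    using S(1)[unfolded open_contains_ball] pS by blast
  define x where "x = Re p"
  define y where "y = Im p"
  have q: "x\<^sup>2 + y\<^sup>2 > 0" using qpos[OF pS] by (simp add: x_def y_def)
  have inS: "p + v \<in> S" if "cmod v < e" for v
    using e that by (auto simp: dist_norm)
  have along_x: "((\<lambda>s. Re (f (p + of_real s))) has_real_derivative Re a) (at t)"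
    if "(f has_derivative (\<lambda>h. of_real (Re h) * a + of_real (Im h) * b)) (at (p + of_real t))"
    for f a b t
    using Re_along_line[of f a b p t 1] that by simp
  have along_y: "((\<lambda>s. Re (f (p + of_real s * \<i>))) has_real_derivative Re b) (at t)"
    if "(f has_derivative (\<lambda>h. of_real (Re h) * a + of_real (Im h) * b)) (at (p + of_real t * \<i>))"
    for f a b t
    using Re_along_line[of f a b p t \<i>] that by simp
  have hx: "Uf (p + of_real t) = Re (w (p + of_real t)) + \<epsilon> / ((x + t)\<^sup>2 + y\<^sup>2)" for t
    by (simp add: Uf_def x_def y_def)
  have cx: "Re (uxx p) + 2 * \<epsilon> * (3 * x\<^sup>2 - y\<^sup>2) / (x\<^sup>2 + y\<^sup>2) ^ 3 \<le> 0"
  proof (rule local_max_second_derivative_nonpos[OF e(1), where g = "\<lambda>t. Uf (p + of_real t)"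
        and g' = "\<lambda>t. Re (ux (p + of_real t)) + (- 2 * \<epsilon> * (x + t) / ((x + t)\<^sup>2 + y\<^sup>2)\<^sup>2)"])
    fix t :: real assume t: "\<bar>t\<bar> < e"
    then have tS: "p + of_real t \<in> S" by (intro inS) simp
    then have "(x + t)\<^sup>2 + y\<^sup>2 > 0" using qpos by (force simp: x_def y_def)
    then show "((\<lambda>t. Uf (p + of_real t)) has_real_derivative
        Re (ux (p + of_real t)) + (- 2 * \<epsilon> * (x + t) / ((x + t)\<^sup>2 + y\<^sup>2)\<^sup>2)) (at t)"
      unfolding hx by (intro DERIV_add along_x[OF U(1)[OF tS]] barrier_line_deriv)
                      (auto simp del: sum_power2_eq_zero_iff)
    show "Uf (p + of_real t) \<le> Uf (p + of_real 0)" using pmax tS by auto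
  next
    have "((\<lambda>t. Re (ux (p + of_real t))) has_real_derivative Re (uxx p)) (at 0)"
      by (rule along_x) (use U(2)[OF pS] in simp)
    then show "((\<lambda>t. Re (ux (p + of_real t)) + (- 2 * \<epsilon> * (x + t) / ((x + t)\<^sup>2 + y\<^sup>2)\<^sup>2))
        has_real_derivative Re (uxx p) + 2 * \<epsilon> * (3 * x\<^sup>2 - y\<^sup>2) / (x\<^sup>2 + y\<^sup>2) ^ 3) (at 0)"
      using q by (intro DERIV_add barrier_line_second_deriv) auto
  qed
  have hy: "Uf (p + of_real t * \<i>) = Re (w (p + of_real t * \<i>)) + \<epsilon> / ((y + t)\<^sup>2 + x\<^sup>2)" for t
    by (simp add: Uf_def x_def y_def add.commute)
  have cy: "Re (uyy p) + 2 * \<epsilon> * (3 * y\<^sup>2 - x\<^sup>2) / (y\<^sup>2 + x\<^sup>2) ^ 3 \<le> 0"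
  proof (rule local_max_second_derivative_nonpos[OF e(1), where g = "\<lambda>t. Uf (p + of_real t * \<i>)"
        and g' = "\<lambda>t. Re (uy (p + of_real t * \<i>)) + (- 2 * \<epsilon> * (y + t) / ((y + t)\<^sup>2 + x\<^sup>2)\<^sup>2)"])
    fix t :: real assume t: "\<bar>t\<bar> < e"
    then have tS: "p + of_real t * \<i> \<in> S" by (intro inS) (simp add: norm_mult)
    then have "(y + t)\<^sup>2 + x\<^sup>2 > 0" using qpos by (force simp: x_def y_def add.commute)
    then show "((\<lambda>t. Uf (p + of_real t * \<i>)) has_real_derivative
        Re (uy (p + of_real t * \<i>)) + (- 2 * \<epsilon> * (y + t) / ((y + t)\<^sup>2 + x\<^sup>2)\<^sup>2)) (at t)"
      unfolding hy by (intro DERIV_add along_y[OF U(1)[OF tS]] barrier_line_deriv)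
                      (auto simp del: sum_power2_eq_zero_iff)
    show "Uf (p + of_real t * \<i>) \<le> Uf (p + of_real 0 * \<i>)" using pmax tS by auto
  next
    have "((\<lambda>t. Re (uy (p + of_real t * \<i>))) has_real_derivative Re (uyy p)) (at 0)"
      by (rule along_y) (use U(3)[OF pS] in simp)
    then show "((\<lambda>t. Re (uy (p + of_real t * \<i>)) + (- 2 * \<epsilon> * (y + t) / ((y + t)\<^sup>2 + x\<^sup>2)\<^sup>2))
        has_real_derivative Re (uyy p) + 2 * \<epsilon> * (3 * y\<^sup>2 - x\<^sup>2) / (y\<^sup>2 + x\<^sup>2) ^ 3) (at 0)"
      using q by (intro DERIV_add barrier_line_second_deriv) (auto simp: add.commute)
  qed
  have "Re (uxx p) + Re (uyy p) = 0"
    using U(4)[OF pS] by (metis plus_complex.sel(1) zero_complex.sel(1))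
  moreover have "2 * \<epsilon> * (3 * x\<^sup>2 - y\<^sup>2) / (x\<^sup>2 + y\<^sup>2) ^ 3 + 2 * \<epsilon> * (3 * y\<^sup>2 - x\<^sup>2) / (y\<^sup>2 + x\<^sup>2) ^ 3
                   = 4 * \<epsilon> / (x\<^sup>2 + y\<^sup>2)\<^sup>2"
  proof -
    define Q where "Q = x\<^sup>2 + y\<^sup>2"
    have Q: "Q \<noteq> 0" "y\<^sup>2 + x\<^sup>2 = Q" using q by (auto simp: Q_def)
    have "2 * \<epsilon> * (3 * x\<^sup>2 - y\<^sup>2) / Q ^ 3 + 2 * \<epsilon> * (3 * y\<^sup>2 - x\<^sup>2) / Q ^ 3 = (4 * \<epsilon> * Q) / Q ^ 3"
      by (simp add: add_divide_distrib[symmetric] Q_def algebra_simps)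
    also have "\<dots> = 4 * \<epsilon> / Q\<^sup>2" using Q by (simp add: power2_eq_square power3_eq_cube)
    finally show ?thesis unfolding Q(2) Q_def .
  qed
  moreover have "4 * \<epsilon> / (x\<^sup>2 + y\<^sup>2)\<^sup>2 > 0" using q eps by (intro divide_pos_pos) auto
  ultimately show False using cx cy by linarith
qed

text \<open>On the outer circle the barrier has negative radial derivative, so if the normal
  derivative of w vanishes there, the sum is larger slightly inside.\<close>
lemma barrier_no_outer_max:
  assumes Ri: "0 < Ri" "Ri < Rd" and eps: "\<epsilon> > 0"
    and outer: "normal_deriv_outer Ri Rd w \<theta> 0"
  shows "\<exists>r. Ri \<le> r \<and> r < Rd \<and>
           Re (w (complex_of_real Rd * cis \<theta>)) + \<epsilon> / Rd\<^sup>2 < Re (w (complex_of_real r * cis \<theta>)) + \<epsilon> / r\<^sup>2"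
proof -
  have d1: "((\<lambda>r. Re (w (complex_of_real r * cis \<theta>))) has_real_derivative 0) (at Rd within {Ri..Rd})"
    using bounded_linear.has_vector_derivative[OF bounded_linear_Re outer[unfolded normal_deriv_outer_def]]
    by (simp add: has_real_derivative_iff_has_vector_derivative)
  have d2: "((\<lambda>r. \<epsilon> / r\<^sup>2) has_real_derivative (- 2 * \<epsilon> / Rd ^ 3)) (at Rd within {Ri..Rd})"
    using Ri by (auto intro!: derivative_eq_intros simp: field_simps power2_eq_square power3_eq_cube)
  have "0 + (- 2 * \<epsilon> / Rd ^ 3) < 0" using eps Ri by simp
  with DERIV_add[OF d1 d2] show ?thesis
    using negative_derivative_at_right_end Ri(2) by blast
qed

lemma polar_form: "z = complex_of_real (cmod z) * cis (Arg z)"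
  using rcis_cmod_Arg[of z] by (simp add: rcis_def)

lemma compact_closed_annulus: "compact (closed_annulus Ri Rd)"
proof -
  have "closed_annulus Ri Rd = cball 0 Rd \<inter> - ball 0 Ri"
    by (auto simp: closed_annulus_def)
  then show ?thesis by (simp add: compact_Int_closed closed_Compl)
qed

lemma open_annulus: "open (annulus Ri Rd)"
proof -
  have "annulus Ri Rd = ball 0 Rd \<inter> - cball 0 Ri"
    by (auto simp: annulus_def)
  then show ?thesis by auto
qed

text \<open>Weak maximum principle for the mixed problem with zero data: the maximum of
  Re w + eps/|z|^2 is attained on the inner circle, hence Re w \<le> eps/Ri^2 for all eps.\<close>
lemma mixed_zero_data_Re_nonpos:
  assumes Ri: "0 < Ri" "Ri < Rd"
    and sol: "mixed_solution Ri Rd (\<lambda>\<theta>. 0) (\<lambda>\<theta>. 0) w"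
    and z: "z \<in> closed_annulus Ri Rd"
  shows "Re (w z) \<le> 0"
proof -
  let ?K = "closed_annulus Ri Rd"
  have cont: "continuous_on ?K w" and harm: "harmonic_C2_on (annulus Ri Rd) w"
    and outer: "\<And>\<theta>. normal_deriv_outer Ri Rd w \<theta> 0"
    and inner: "\<And>\<theta>. w (complex_of_real Ri * cis \<theta>) = 0"
    using sol unfolding mixed_solution_def by auto
  have cmod_pos: "cmod y > 0" if "y \<in> ?K" for y
    using that Ri by (auto simp: closed_annulus_def)
  have annK: "annulus Ri Rd \<subseteq> ?K" by (auto simp: annulus_def closed_annulus_def)
  have eps_bound: "Re (w z) \<le> \<epsilon> / Ri\<^sup>2" if eps: "\<epsilon> > 0" for \<epsilon>
  proof -
    define U where "U y = Re (w y) + \<epsilon> / (cmod y)\<^sup>2" for y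
    have "continuous_on ?K U"
      unfolding U_def using cmod_pos by (intro continuous_intros cont) force
    then obtain p where pK: "p \<in> ?K" and pmax: "\<And>y. y \<in> ?K \<Longrightarrow> U y \<le> U p"
      using continuous_attains_sup[OF compact_closed_annulus] z by blast
    consider "cmod p = Ri" | "cmod p = Rd" | "Ri < cmod p \<and> cmod p < Rd"
      using pK unfolding closed_annulus_def by fastforce
    then show ?thesis
    proof cases
      case 1
      then have "U p = \<epsilon> / Ri\<^sup>2" using inner[of "Arg p"] polar_form[of p] by (simp add: U_def)
      moreover have "\<epsilon> / (cmod z)\<^sup>2 \<ge> 0" using eps by simp
      ultimately show ?thesis using pmax[OF z] by (simp add: U_def)
    next
      case 2
      then have pe: "p = complex_of_real Rd * cis (Arg p)" using polar_form[of p] by simp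
      obtain r where r: "Ri \<le> r" "r < Rd"
        "Re (w (complex_of_real Rd * cis (Arg p))) + \<epsilon> / Rd\<^sup>2 <
         Re (w (complex_of_real r * cis (Arg p))) + \<epsilon> / r\<^sup>2"
        using barrier_no_outer_max[OF Ri eps outer] by blast
      have rK: "complex_of_real r * cis (Arg p) \<in> ?K"
        using r Ri by (auto simp: closed_annulus_def norm_mult)
      have "U p < U (complex_of_real r * cis (Arg p))"
        using r Ri 2 pe by (simp add: U_def norm_mult)
      then show ?thesis using pmax[OF rK] by simp
    next
      case 3
      then have "p \<in> annulus Ri Rd" by (simp add: annulus_def)
      moreover have "0 \<notin> annulus Ri Rd" using Ri by (auto simp: annulus_def)
      ultimately show ?thesis
        using barrier_no_interior_max[OF harm open_annulus _ _ eps, of p] pmax annK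
        unfolding U_def by blast
    qed
  qed
  show ?thesis
  proof (rule ccontr)
    assume "\<not> Re (w z) \<le> 0"
    then have "Re (w z) * Ri\<^sup>2 / 2 > 0" using Ri by simp
    from eps_bound[OF this] have "Re (w z) \<le> Re (w z) / 2" using Ri by simp
    then show False using \<open>\<not> Re (w z) \<le> 0\<close> by simp
  qed
qed

text \<open>Applying the previous bound to c w for c = 1, -1, i, -i gives w = 0.\<close>
lemma mixed_zero_data_vanishes:
  assumes Ri: "0 < Ri" "Ri < Rd"
    and sol: "mixed_solution Ri Rd (\<lambda>\<theta>. 0) (\<lambda>\<theta>. 0) w"
    and z: "z \<in> closed_annulus Ri Rd"
  shows "w z = 0"
proof -
  have "mixed_solution Ri Rd (\<lambda>\<theta>. 0) (\<lambda>\<theta>. 0) (\<lambda>z. c * w z)" for c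
    using mixed_solution_lincomb[OF sol sol, of c 0] by simp
  then have "Re (c * w z) \<le> 0" for c
    using mixed_zero_data_Re_nonpos[OF Ri _ z] by blast
  from this[of 1] this[of "-1"] this[of \<i>] this[of "-\<i>"] show ?thesis
    by (simp add: complex_eq_iff)
qed

lemma mixed_solution_unique:
  assumes Ri: "0 < Ri" "Ri < Rd"
    and u1: "mixed_solution Ri Rd g h u1" and u2: "mixed_solution Ri Rd g h u2"
    and z: "z \<in> closed_annulus Ri Rd"
  shows "u1 z = u2 z"
proof -
  have "mixed_solution Ri Rd (\<lambda>\<theta>. 0) (\<lambda>\<theta>. 0) (\<lambda>z. u1 z - u2 z)"
    using mixed_solution_lincomb[OF u1 u2, of 1 "-1"] by simp
  from mixed_zero_data_vanishes[OF Ri this z] show ?thesis by simp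
qed


section \<open>Explicit modal solutions of the primary and adjoint problems\<close>

lemma Cj_nonzero_mode:
  assumes "0 < x" "0 < y" "j \<noteq> 0"
  shows "Cj x y j = 8 * (grow_rad j y)\<^sup>2 * y * (grow_rad j x)\<^sup>2 / (x * ((grow_rad j x)\<^sup>2 + (grow_rad j y)\<^sup>2)\<^sup>2)"
proof -
  define n where "n = nat \<bar>j\<bar>"
  have n: "\<bar>real_of_int j\<bar> = real n" using assms(3) by (auto simp: n_def)
  have t: "2 * \<bar>real_of_int j\<bar> = real (2 * n)" using n by simp
  have e1: "r powr (2 * \<bar>real_of_int j\<bar>) = (r ^ n)\<^sup>2" if "r > 0" for r
    unfolding t using powr_realpow[OF that, of "2*n"] power_even_eq[of r n] by simp
  have e2: "y powr (2 * \<bar>real_of_int j\<bar> + 1) = (y ^ n)\<^sup>2 * y"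
    unfolding powr_add e1[OF assms(2)] using assms by simp
  have e3: "x powr (2 * \<bar>real_of_int j\<bar> - 1) = (x ^ n)\<^sup>2 / x"
    unfolding powr_diff e1[OF assms(1)] using assms by simp
  show ?thesis unfolding Cj_def e2 e3 e1[OF assms(1)] e1[OF assms(2)] grow_rad_def n_def[symmetric]
    by (simp add: divide_simps)
qed

lemma Cj_zero_mode: "0 < x \<Longrightarrow> 0 < y \<Longrightarrow> Cj x y 0 = 2 * y / x"
  by (simp add: Cj_def powr_minus_divide)

lemma Cj_pos:
  assumes "0 < Ri" "0 < Rd" shows "Cj Ri Rd j > 0"
proof -
  have "Ri powr (2 * \<bar>real_of_int j\<bar>) + Rd powr (2 * \<bar>real_of_int j\<bar>) > 0"
    using assms by (intro add_pos_pos) auto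
  then show ?thesis unfolding Cj_def using assms by (intro divide_pos_pos mult_pos_pos) auto
qed

lemma Cj_abs: "Cj Ri Rd \<bar>j\<bar> = Cj Ri Rd j"
  unfolding Cj_def by simp

text \<open>Radial coefficients of the mode-j solution of the primary problem with data
  (Neumann 0 on the outer circle, Dirichlet 1 on the inner circle).\<close>
definition prim_A :: "real \<Rightarrow> real \<Rightarrow> int \<Rightarrow> real" where
  "prim_A x y j = (if j = 0 then 1 else grow_rad j x / ((grow_rad j x)\<^sup>2 + (grow_rad j y)\<^sup>2))"
definition prim_B :: "real \<Rightarrow> real \<Rightarrow> int \<Rightarrow> real" where
  "prim_B x y j = (if j = 0 then 0
                   else grow_rad j x * (grow_rad j y)\<^sup>2 / ((grow_rad j x)\<^sup>2 + (grow_rad j y)\<^sup>2))"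

text \<open>Radial coefficients of the mode-j solution of the adjoint problem whose Neumann data
  is -2 times the outer trace of the primary solution and whose Dirichlet data is 0.\<close>
definition adj_amplitude :: "real \<Rightarrow> real \<Rightarrow> int \<Rightarrow> real" where
  "adj_amplitude x y j = - 4 * grow_rad j x * (grow_rad j y)\<^sup>2 * y
                          / (real (nat \<bar>j\<bar>) * ((grow_rad j x)\<^sup>2 + (grow_rad j y)\<^sup>2)\<^sup>2)"
definition adj_A :: "real \<Rightarrow> real \<Rightarrow> int \<Rightarrow> real" where
  "adj_A x y j = (if j = 0 then 2 * y * ln x else adj_amplitude x y j)"
definition adj_B :: "real \<Rightarrow> real \<Rightarrow> int \<Rightarrow> real" where
  "adj_B x y j = (if j = 0 then - 2 * y else - adj_amplitude x y j * (grow_rad j x)\<^sup>2)"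

lemma modal_coefficients_nonzero_mode:
  assumes x: "0 < x" and y: "0 < y" and j: "j \<noteq> 0"
  shows "profile (prim_A x y) (prim_B x y) j x = 1 \<and>
         profile_deriv (prim_A x y) (prim_B x y) j y = 0 \<and>
         profile (adj_A x y) (adj_B x y) j x = 0 \<and>
         profile_deriv (adj_A x y) (adj_B x y) j y = - 2 * profile (prim_A x y) (prim_B x y) j y \<and>
         profile_deriv (adj_A x y) (adj_B x y) j x = - Cj x y j"
proof -
  define X where "X = grow_rad j x"
  define Y where "Y = grow_rad j y"
  define N where "N = real (nat \<bar>j\<bar>)"
  define Dv where "Dv = X\<^sup>2 + Y\<^sup>2"
  define PQ where "PQ = - 4 * X * Y\<^sup>2 * y / (N * Dv\<^sup>2)"
  have X: "X > 0" and Y: "Y > 0" using x y by (auto simp: X_def Y_def grow_rad_def)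
  have N: "N > 0" using j by (simp add: N_def)
  have Dv: "Dv \<noteq> 0" using X Y by (simp add: Dv_def add_pos_pos less_imp_neq[symmetric])
  have coeff: "prim_A x y j = X / Dv" "prim_B x y j = X * Y\<^sup>2 / Dv"
    "adj_A x y j = PQ" "adj_B x y j = - PQ * X\<^sup>2"
    using j by (simp_all add: prim_A_def prim_B_def adj_A_def adj_B_def adj_amplitude_def
                              PQ_def X_def Y_def N_def Dv_def)
  have rad: "grow_rad j x = X" "grow_rad j y = Y" "decay_rad j x = 1 / X" "decay_rad j y = 1 / Y"
    "grow_rad_deriv j x = N * X / x" "grow_rad_deriv j y = N * Y / y"
    "decay_rad_deriv j x = - N / (X * x)" "decay_rad_deriv j y = - N / (Y * y)"
    using j by (simp_all add: X_def Y_def N_def grow_rad_def decay_rad_def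
                              grow_rad_deriv_def decay_rad_deriv_def)
  have c: "Cj x y j = 8 * Y\<^sup>2 * y * X\<^sup>2 / (x * Dv\<^sup>2)"
    using Cj_nonzero_mode[OF x y j] by (simp add: X_def Y_def Dv_def)
  have q1: "X / Dv * X + X * Y\<^sup>2 / Dv * (1 / X) = 1"
    using X Dv by (simp add: field_simps) (simp add: Dv_def power2_eq_square)
  have q2: "X / Dv * (N * Y / y) + X * Y\<^sup>2 / Dv * (- N / (Y * y)) = 0"
    using Y y Dv by (simp add: field_simps power2_eq_square)
  have q3: "PQ * X + - PQ * X\<^sup>2 * (1 / X) = 0"
    using X by (simp add: field_simps power2_eq_square)
  have q4: "PQ * (N * Y / y) + - PQ * X\<^sup>2 * (- N / (Y * y)) = - 2 * (X / Dv * Y + X * Y\<^sup>2 / Dv * (1 / Y))"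
    using X Y N y Dv unfolding PQ_def
    by (simp add: field_simps) (simp add: Dv_def algebra_simps power2_eq_square)
  have q5: "PQ * (N * X / x) + - PQ * X\<^sup>2 * (- N / (X * x)) = - (8 * Y\<^sup>2 * y * X\<^sup>2 / (x * Dv\<^sup>2))"
    using X Y N x Dv unfolding PQ_def by (simp add: field_simps power2_eq_square)
  show ?thesis
    unfolding profile_def profile_deriv_def coeff rad c using q1 q2 q3 q4 q5 by blast
qed

lemma modal_coefficients:
  assumes x: "0 < x" and y: "0 < y"
  shows "profile (prim_A x y) (prim_B x y) j x = 1"
    and "profile_deriv (prim_A x y) (prim_B x y) j y = 0"
    and "profile (adj_A x y) (adj_B x y) j x = 0"
    and "profile_deriv (adj_A x y) (adj_B x y) j y = - 2 * profile (prim_A x y) (prim_B x y) j y"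
    and "profile_deriv (adj_A x y) (adj_B x y) j x = - Cj x y j"
proof -
  have "profile (prim_A x y) (prim_B x y) j x = 1 \<and>
        profile_deriv (prim_A x y) (prim_B x y) j y = 0 \<and>
        profile (adj_A x y) (adj_B x y) j x = 0 \<and>
        profile_deriv (adj_A x y) (adj_B x y) j y = - 2 * profile (prim_A x y) (prim_B x y) j y \<and>
        profile_deriv (adj_A x y) (adj_B x y) j x = - Cj x y j"
  proof (cases "j = 0")
    case True
    then show ?thesis
      using x y by (simp add: profile_def profile_deriv_def prim_A_def prim_B_def adj_A_def adj_B_def
          grow_rad_def decay_rad_def grow_rad_deriv_def decay_rad_deriv_def Cj_zero_mode)
  next
    case False
    then show ?thesis by (rule modal_coefficients_nonzero_mode[OF x y])
  qed
  then show "profile (prim_A x y) (prim_B x y) j x = 1"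
    and "profile_deriv (prim_A x y) (prim_B x y) j y = 0"
    and "profile (adj_A x y) (adj_B x y) j x = 0"
    and "profile_deriv (adj_A x y) (adj_B x y) j y = - 2 * profile (prim_A x y) (prim_B x y) j y"
    and "profile_deriv (adj_A x y) (adj_B x y) j x = - Cj x y j" by auto
qed


section \<open>The gradient acts diagonally on Fourier modes\<close>

text \<open>The
  primary error v* - v_k and the adjoint state are identified with explicit mode sums
  by uniqueness; J' is then the radial derivative of the latter on the inner circle.\<close>
lemma gradient_fourier:
  assumes Ri: "0 < Ri" "Ri < Rd"
    and ms: "mixed_solution Ri Rd qbar \<omega>s vs"
    and vsb: "\<And>\<theta>. vs (complex_of_real Rd * cis \<theta>) = ubar \<theta>"
    and mk: "mixed_solution Ri Rd qbar \<omega>k vk"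
    and mh: "mixed_solution Ri Rd (\<lambda>\<theta>. 2 * (vk (complex_of_real Rd * cis \<theta>) - ubar \<theta>)) (\<lambda>\<theta>. 0) vh"
    and grad: "\<And>\<theta>. normal_deriv_inner Ri Rd vh \<theta> (- Jk \<theta>)"
    and fin: "finite S"
    and err: "\<And>\<theta>. \<omega>s \<theta> - \<omega>k \<theta> = (\<Sum>j\<in>S. c j * fourier j \<theta>)"
  shows "Jk \<theta> = - (\<Sum>j\<in>S. c j * of_real (Cj Ri Rd j) * fourier j \<theta>)"
proof -
  have Rd: "0 < Rd" using Ri by simp
  note cf = modal_coefficients[OF Ri(1) Rd]
  define W where "W = mode_sum S c (prim_A Ri Rd) (prim_B Ri Rd)"
  define V where "V = mode_sum S c (adj_A Ri Rd) (adj_B Ri Rd)"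
  define outer_W where
    "outer_W \<theta> = (\<Sum>j\<in>S. c j * of_real (profile (prim_A Ri Rd) (prim_B Ri Rd) j Rd) * fourier j \<theta>)"
    for \<theta>
  have inK: "complex_of_real r * cis t \<in> closed_annulus Ri Rd" if "r \<in> {Ri..Rd}" for r t
    using that Ri by (auto simp: closed_annulus_def norm_mult)
  have RiI: "Ri \<in> {Ri..Rd}" and RdI: "Rd \<in> {Ri..Rd}" using Ri by auto
  have "mixed_solution Ri Rd (\<lambda>\<theta>. 0) (\<lambda>\<theta>. \<Sum>j\<in>S. c j * fourier j \<theta>) (\<lambda>z. vs z - vk z)"
    using mixed_solution_lincomb[OF ms mk, of 1 "-1"] err by simp
  moreover have "mixed_solution Ri Rd (\<lambda>\<theta>. 0) (\<lambda>\<theta>. \<Sum>j\<in>S. c j * fourier j \<theta>) W"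
    using mode_sum_mixed_solution[OF Ri fin, of c "prim_A Ri Rd" "prim_B Ri Rd"] unfolding W_def cf(1,2) by simp
  ultimately have primary_error: "vs z - vk z = W z" if "z \<in> closed_annulus Ri Rd" for z
    using mixed_solution_unique[OF Ri _ _ that] by blast
  have "vk (complex_of_real Rd * cis t) - ubar t = - outer_W t" for t
    using primary_error[OF inK[OF RdI, of t]] vsb[of t]
    unfolding W_def mode_sum_polar[OF Rd] outer_W_def by (simp add: algebra_simps)
  then have "mixed_solution Ri Rd (\<lambda>\<theta>. - 2 * outer_W \<theta>) (\<lambda>\<theta>. 0) vh"
    using mh by simp
  moreover have "mixed_solution Ri Rd (\<lambda>\<theta>. - 2 * outer_W \<theta>) (\<lambda>\<theta>. 0) V"
    using mode_sum_mixed_solution[OF Ri fin, of c "adj_A Ri Rd" "adj_B Ri Rd"] unfolding V_def cf(3,4) outer_W_def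
    by (simp add: sum_distrib_left algebra_simps)
  ultimately have adjoint_state: "V z = vh z" if "z \<in> closed_annulus Ri Rd" for z
    using mixed_solution_unique[OF Ri _ _ that] by blast
  have "((\<lambda>r. vh (complex_of_real r * cis \<theta>)) has_vector_derivative
          (\<Sum>j\<in>S. c j * of_real (profile_deriv (adj_A Ri Rd) (adj_B Ri Rd) j Ri) * fourier j \<theta>))
          (at Ri within {Ri..Rd})"
    using mode_sum_radial_derivative[OF Ri(1) RiI]
    by (rule has_vector_derivative_transform_within[where d=1])
       (use RiI adjoint_state inK in \<open>auto simp: V_def\<close>)
  moreover have "((\<lambda>r. vh (complex_of_real r * cis \<theta>)) has_vector_derivative Jk \<theta>) (at Ri within {Ri..Rd})"
    using grad[of \<theta>] unfolding normal_deriv_inner_def by simp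
  ultimately have "Jk \<theta> = (\<Sum>j\<in>S. c j * of_real (profile_deriv (adj_A Ri Rd) (adj_B Ri Rd) j Ri) * fourier j \<theta>)"
    using vector_derivative_unique_within_closed_interval[OF Ri(2), of Ri] RiI
    by (simp add: cbox_interval)
  then show ?thesis
    unfolding cf(5) by (simp add: sum_negf[symmetric])
qed


lemma error_fourier_evolution:
  fixes C :: "int \<Rightarrow> real"
  assumes mu0: "\<And>\<theta>. \<omega>s \<theta> - \<omega> 0 \<theta> = (\<Sum>j\<in>S. a j * fourier j \<theta>)"
    and iteration: "\<And>k \<theta>. \<omega> (Suc k) \<theta> = \<omega> k \<theta> - complex_of_real (\<rho> k) * J' k \<theta>"
    and diagonal: "\<And>k c \<theta>. (\<And>\<theta>. \<omega>s \<theta> - \<omega> k \<theta> = (\<Sum>j\<in>S. c j * fourier j \<theta>)) \<Longrightarrow>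
                     J' k \<theta> = - (\<Sum>j\<in>S. c j * of_real (C j) * fourier j \<theta>)"
  shows "\<omega>s \<theta> - \<omega> k \<theta> = (\<Sum>j\<in>S. (a j * (\<Prod>i<k. of_real (1 - \<rho> i * C j))) * fourier j \<theta>)"
proof (induction k arbitrary: \<theta>)
  case 0
  then show ?case using mu0 by simp
next
  case (Suc k)
  define b where "b j = a j * (\<Prod>i<k. complex_of_real (1 - \<rho> i * C j))" for j
  have J: "J' k \<theta> = - (\<Sum>j\<in>S. b j * of_real (C j) * fourier j \<theta>)"
    by (rule diagonal[of k b]) (simp add: Suc.IH b_def)
  have "\<omega>s \<theta> - \<omega> (Suc k) \<theta> = (\<omega>s \<theta> - \<omega> k \<theta>) + of_real (\<rho> k) * J' k \<theta>"
    by (simp add: iteration)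
  also have "\<dots> = (\<Sum>j\<in>S. b j * fourier j \<theta> - of_real (\<rho> k) * (b j * of_real (C j) * fourier j \<theta>))"
    unfolding Suc.IH J b_def[symmetric] by (simp add: sum_distrib_left sum_subtractf)
  also have "\<dots> = (\<Sum>j\<in>S. (a j * (\<Prod>i<Suc k. of_real (1 - \<rho> i * C j))) * fourier j \<theta>)"
    by (rule sum.cong) (auto simp: b_def algebra_simps)
  finally show ?case .
qed

lemma schedule_annihilates_mode:
  fixes C :: "int \<Rightarrow> real" and M N :: nat
  assumes steps: "(\<forall>k\<le>N - M. \<rho> k = 1 / C (int (M + k))) \<or> (\<forall>k\<le>N - M. \<rho> k = 1 / C (int (N - k)))"
    and C_abs: "\<And>j. C \<bar>j\<bar> = C j" and C_nz: "\<And>j. C j \<noteq> 0"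
    and j: "int M \<le> \<bar>j\<bar>" "\<bar>j\<bar> \<le> int N"
  shows "\<exists>i<N - M + 1. \<rho> i * C j = 1"
proof -
  have "\<exists>i\<le>N - M. \<rho> i = 1 / C j"
  proof (cases "\<forall>k\<le>N - M. \<rho> k = 1 / C (int (M + k))")
    case True
    have "int (M + (nat \<bar>j\<bar> - M)) = \<bar>j\<bar>" "nat \<bar>j\<bar> - M \<le> N - M" using j by auto
    then show ?thesis using True C_abs by metis
  next
    case False
    then have late: "\<forall>k\<le>N - M. \<rho> k = 1 / C (int (N - k))" using steps by blast
    have "int (N - (N - nat \<bar>j\<bar>)) = \<bar>j\<bar>" "N - nat \<bar>j\<bar> \<le> N - M" using j by auto
    then show ?thesis using late C_abs by metis
  qed
  then show ?thesis using C_nz[of j] by (metis Suc_eq_plus1 le_imp_less_Suc nonzero_divide_eq_eq)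
qed


theorem theorem2:
  fixes Ri Rd :: real
    and ubar qbar \<omega>star :: "real \<Rightarrow> complex"
    and \<omega> J' :: "nat \<Rightarrow> real \<Rightarrow> complex"
    and v vhat :: "nat \<Rightarrow> complex \<Rightarrow> complex"
    and \<rho> :: "nat \<Rightarrow> real"
    and M N :: nat
    and a :: "int \<Rightarrow> complex"
  assumes radii: "0 < Ri" "Ri < Rd"
    and exact: "\<exists>vs. mixed_solution Ri Rd qbar \<omega>star vs \<and>
                     (\<forall>\<theta>. vs (complex_of_real Rd * cis \<theta>) = ubar \<theta>)"
    and primary: "\<And>k. mixed_solution Ri Rd qbar (\<omega> k) (v k)"
    and adjoint: "\<And>k. mixed_solution Ri Rd
                     (\<lambda>\<theta>. 2 * (v k (complex_of_real Rd * cis \<theta>) - ubar \<theta>)) (\<lambda>\<theta>. 0) (vhat k)"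
    and gradient: "\<And>k \<theta>. normal_deriv_inner Ri Rd (vhat k) \<theta> (- J' k \<theta>)"
    and iteration: "\<And>k \<theta>. \<omega> (Suc k) \<theta> = \<omega> k \<theta> - complex_of_real (\<rho> k) * J' k \<theta>"
    and MN: "M \<le> N"
    and mu0: "\<And>\<theta>. \<omega>star \<theta> - \<omega> 0 \<theta> =
                 (\<Sum>j\<in>{j::int. int M \<le> \<bar>j\<bar> \<and> \<bar>j\<bar> \<le> int N}.
                     a j * exp (\<i> * of_int j * complex_of_real \<theta>))"
    and steps: "(\<forall>k\<le>N - M. \<rho> k = 1 / Cj Ri Rd (int (M + k))) \<or>
                (\<forall>k\<le>N - M. \<rho> k = 1 / Cj Ri Rd (int (N - k)))"
  shows "\<forall>\<theta>. \<omega>star \<theta> - \<omega> (N - M + 1) \<theta> = 0"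
proof
  fix \<theta>
  obtain vs where ms: "mixed_solution Ri Rd qbar \<omega>star vs"
    and vsb: "\<And>\<theta>. vs (complex_of_real Rd * cis \<theta>) = ubar \<theta>"
    using exact by blast
  define S where "S = {j::int. int M \<le> \<bar>j\<bar> \<and> \<bar>j\<bar> \<le> int N}"
  have fin: "finite S"
    by (rule finite_subset[of _ "{- int N..int N}"]) (auto simp: S_def)
  have error: "\<omega>star \<theta> - \<omega> (N - M + 1) \<theta> =
      (\<Sum>j\<in>S. (a j * (\<Prod>i<N - M + 1. of_real (1 - \<rho> i * Cj Ri Rd j))) * fourier j \<theta>)"
    using mu0 iteration gradient_fourier[OF radii ms vsb primary adjoint gradient fin]
    by (intro error_fourier_evolution) (auto simp: S_def fourier_def)
  have Cj_nz: "Cj Ri Rd j \<noteq> 0" for j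
    using Cj_pos[of Ri Rd j] radii by simp
  have "(\<Prod>i<N - M + 1. complex_of_real (1 - \<rho> i * Cj Ri Rd j)) = 0" if jS: "j \<in> S" for j
  proof -
    obtain i where "i < N - M + 1" "\<rho> i * Cj Ri Rd j = 1"
      using schedule_annihilates_mode[OF steps Cj_abs Cj_nz] jS by (auto simp: S_def)
    then show ?thesis by (intro prod_zero bexI[of _ i]) auto
  qed
  then show "\<omega>star \<theta> - \<omega> (N - M + 1) \<theta> = 0"
    unfolding error by (intro sum.neutral ballI) (metis mult_zero_left mult_zero_right)
qed
end
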